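(* Let $q$ be a prime power with $q-1=em$ for positive integers $e,m$, and let $\sigma\in\mathbb{F}_q$. For each $i=0,\dots,e-1$ let $A_i,B_i$ be $0$-$1$ matrices with rows and columns indexed by $\mathbb{F}_q$, each of whose row indexed by $0$ has a $1$ exactly in the columns indexed by elements of $D_0^e$. Assume that for each $i$ the product $A_iB_i$ is $\sigma$-circulant and $B_i$ is $\sigma_i$-circulant for some $\sigma_i\in D_i^e$. Let $C$ be the $\sigma$-circulant matrix whose row indexed by $0$ has a $1$ exactly in the columns indexed by elements of $D_0^e$. Then $\sum_{i=0}^{e-1}A_iB_i+C=mJ$, where $J$ is the $q\times q$ all-ones matrix.
   Context: For a primitive element $\gamma$ of $\mathbb{F}_q$ and $e\mid q-1$, the cyclotomic classes are $D_i^e=\gamma^i\langle\gamma^e\rangle$, $i=0,\dots,e-1$. For $\tau\in\mathbb{F}_q$, a matrix $N$ with rows and columns indexed by $\mathbb{F}_q$ is $\tau$-circulant if $N_{x,y}=N_{x-k,\,y-\tau k}$ for all $x,y,k\in\mathbb{F}_q$. *)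

theory Defs
  imports Main "HOL-Library.Cardinality"
begin

definition primitive_elem :: "'a::{finite,field} \<Rightarrow> bool" where
  "primitive_elem g \<longleftrightarrow> g \<noteq> 0 \<and> (\<forall>x. x \<noteq> 0 \<longrightarrow> (\<exists>k::nat. x = g ^ k))"

definition cyc_class :: "'a::field \<Rightarrow> nat \<Rightarrow> nat \<Rightarrow> 'a set" where
  "cyc_class g e i = {g ^ i * (g ^ e) ^ k | k::nat. True}"

definition tau_circulant :: "'a::field \<Rightarrow> ('a \<Rightarrow> 'a \<Rightarrow> int) \<Rightarrow> bool" where
  "tau_circulant t N \<longleftrightarrow> (\<forall>x y k. N x y = N (x - k) (y - t * k))"

definition mat_mult :: "('a::finite \<Rightarrow> 'a \<Rightarrow> int) \<Rightarrow> ('a \<Rightarrow> 'a \<Rightarrow> int) \<Rightarrow> 'a \<Rightarrow> 'a \<Rightarrow> int" where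
  "mat_mult A B = (\<lambda>x y. \<Sum>z\<in>UNIV. A x z * B z y)"

definition zero_one_mat :: "('a \<Rightarrow> 'a \<Rightarrow> int) \<Rightarrow> bool" where
  "zero_one_mat A \<longleftrightarrow> (\<forall>x y. A x y = 0 \<or> A x y = 1)"

end

theory Submission
  imports Defs
begin

text \<open>Entry (0, r) of A_i B_i counts the z \<in> D_0 with r - \<sigma>_i z \<in> D_0, i.e. the u \<in> D_i with
  r - u \<in> D_0. As the classes D_i partition the nonzero elements, summing over i counts the
  u \<noteq> 0 with r - u \<in> D_0, and u \<mapsto> r - u maps these onto D_0 - {r}; adding C 0 r, the
  indicator of r \<in> D_0, gives |D_0| = m. Since A_i B_i and C are \<sigma>-circulant,
  row 0 determines every row.\<close>

lemma field_power_card_minus_one: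
  fixes x :: "'a::{finite,field}"
  assumes "x \<noteq> 0"
  shows "x ^ (CARD('a) - 1) = 1"
proof -
  let ?S = "UNIV - {0::'a}"
  have "bij_betw ((*) x) ?S ?S"
  proof (rule bij_betw_imageI)
    show "inj_on ((*) x) ?S" using assms by (auto simp: inj_on_def)
    show "(*) x ` ?S = ?S"
    proof
      show "?S \<subseteq> (*) x ` ?S"
      proof
        fix z assume "z \<in> ?S"
        then have "z = x * (z / x)" "z / x \<in> ?S" using assms by auto
        then show "z \<in> (*) x ` ?S" by blast
      qed
    qed (use assms in auto)
  qed
  then have "prod ((*) x) ?S = prod id ?S"
    using prod.reindex_bij_betw[of "(*) x" ?S ?S id] by simp
  moreover have "prod ((*) x) ?S = x ^ card ?S * prod id ?S"
    by (simp add: prod.distrib)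
  moreover have "prod id ?S \<noteq> 0" by (simp add: prod_zero_iff)
  moreover have "card ?S = CARD('a) - 1" by (simp add: card_Diff_singleton)
  ultimately show ?thesis by (metis mult_cancel_right2)
qed

lemma tau_circulant_eq_row_zero:
  "tau_circulant t N \<Longrightarrow> N x y = N 0 (y - t * x)"
  unfolding tau_circulant_def by (metis diff_self)

lemma mat_mult_row_zero_indicator:
  fixes A B :: "'a::{finite,field} \<Rightarrow> 'a \<Rightarrow> int"
  assumes "\<forall>y. A 0 y = (if y \<in> D then 1 else 0)" and "\<forall>y. B 0 y = (if y \<in> D then 1 else 0)"
    and "tau_circulant t B"
  shows "mat_mult A B 0 r = int (card {z \<in> D. r - t * z \<in> D})"
proof -
  have "mat_mult A B 0 r = (\<Sum>z\<in>UNIV. if z \<in> D \<and> r - t * z \<in> D then 1 else 0)"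
    unfolding mat_mult_def
    using assms tau_circulant_eq_row_zero[OF assms(3)] by (intro sum.cong) auto
  also have "\<dots> = int (card {z \<in> D. r - t * z \<in> D})"
    by (simp add: sum.If_cases)
  finally show ?thesis .
qed

lemma card_scaled_differences:
  fixes t :: "'a::field"
  assumes "t \<noteq> 0"
  shows "card {z \<in> D. r - t * z \<in> E} = card {u \<in> (*) t ` D. r - u \<in> E}"
proof -
  have image: "(*) t ` {z \<in> D. r - t * z \<in> E} = {u \<in> (*) t ` D. r - u \<in> E}" by blast
  have "inj_on ((*) t) {z \<in> D. r - t * z \<in> E}"
    using assms by (auto simp: inj_on_def)
  then show ?thesis unfolding image[symmetric] by (rule card_image[symmetric])
qed

lemma card_nonzero_differences:
  fixes r :: "'a::ab_group_add"
  shows "card {u. u \<noteq> 0 \<and> r - u \<in> D} = card (D - {r})"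
proof -
  have image: "(\<lambda>u. r - u) ` {u. u \<noteq> 0 \<and> r - u \<in> D} = D - {r}"
  proof
    show "D - {r} \<subseteq> (\<lambda>u. r - u) ` {u. u \<noteq> 0 \<and> r - u \<in> D}"
    proof
      fix w assume "w \<in> D - {r}"
      then have "w = r - (r - w)" "r - w \<in> {u. u \<noteq> 0 \<and> r - u \<in> D}" by auto
      then show "w \<in> (\<lambda>u. r - u) ` {u. u \<noteq> 0 \<and> r - u \<in> D}" by blast
    qed
  qed auto
  have "inj_on (\<lambda>u. r - u) {u. u \<noteq> 0 \<and> r - u \<in> D}" by (auto simp: inj_on_def)
  then show ?thesis unfolding image[symmetric] by (rule card_image[symmetric])
qed

locale cyclotomic_classes =
  fixes g :: "'a::{finite,field}" and e m :: nat
  assumes primitive: "primitive_elem g" and card_eq: "CARD('a) - 1 = e * m"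
    and e_pos: "0 < e" and m_pos: "0 < m"
begin

lemma g_nonzero: "g \<noteq> 0"
  using primitive by (simp add: primitive_elem_def)

lemma g_power_period: "g ^ (e * m) = 1"
  using field_power_card_minus_one[OF g_nonzero] card_eq by simp

lemma g_power_mod: "g ^ k = g ^ (k mod (e * m))"
proof -
  have "g ^ k = g ^ (e * m * (k div (e * m)) + k mod (e * m))" by simp
  also have "\<dots> = (g ^ (e * m)) ^ (k div (e * m)) * g ^ (k mod (e * m))"
    by (simp only: power_add power_mult)
  finally show ?thesis by (simp add: g_power_period)
qed

lemma nonzero_eq_g_power:
  assumes "x \<noteq> 0"
  shows "\<exists>t < e * m. x = g ^ t"
proof -
  obtain k :: nat where "x = g ^ k" using primitive assms by (auto simp: primitive_elem_def)
  then have "x = g ^ (k mod (e * m))" using g_power_mod[of k] by simp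
  moreover have "k mod (e * m) < e * m" using e_pos m_pos by simp
  ultimately show ?thesis by blast
qed

lemma inj_on_g_power: "inj_on (\<lambda>k. g ^ k) {..<e * m}"
proof (rule eq_card_imp_inj_on)
  have "(\<lambda>k. g ^ k) ` {..<e * m} = UNIV - {0}"
  proof
    show "UNIV - {0} \<subseteq> (\<lambda>k. g ^ k) ` {..<e * m}"
    proof
      fix x :: 'a assume "x \<in> UNIV - {0}"
      then obtain t where "t < e * m" "x = g ^ t" using nonzero_eq_g_power by blast
      then show "x \<in> (\<lambda>k. g ^ k) ` {..<e * m}" by simp
    qed
  qed (use g_nonzero in auto)
  then show "card ((\<lambda>k. g ^ k) ` {..<e * m}) = card {..<e * m}"
    using card_eq by (simp add: card_Diff_singleton)
qed simp

lemma cyc_class_eq_image: "cyc_class g e i = (\<lambda>k. g ^ (i + e * k)) ` {..<m}"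
proof -
  have power_eq: "g ^ i * (g ^ e) ^ k = g ^ (i + e * k)" for k
    by (simp add: power_add power_mult)
  have periodic: "g ^ (i + e * k) = g ^ (i + e * (k mod m))" for k
  proof -
    have "e * k = e * (m * (k div m) + k mod m)" by simp
    also have "\<dots> = e * m * (k div m) + e * (k mod m)" by (simp only: distrib_left mult.assoc)
    finally have "i + e * k = e * m * (k div m) + (i + e * (k mod m))" by simp
    then have "g ^ (i + e * k) = (g ^ (e * m)) ^ (k div m) * g ^ (i + e * (k mod m))"
      by (simp only: power_add power_mult[of g "e * m"])
    then show ?thesis by (simp add: g_power_period)
  qed
  have "g ^ (i + e * k) \<in> (\<lambda>k. g ^ (i + e * k)) ` {..<m}" for k
    using periodic[of k] m_pos by (auto intro: image_eqI[of _ _ "k mod m"])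
  then show ?thesis
    unfolding cyc_class_def power_eq by auto
qed

lemma g_power_eqD:
  assumes "i < e" "j < e" "k < m" "l < m" and eq: "g ^ (i + e * k) = g ^ (j + e * l)"
  shows "i = j \<and> k = l"
proof -
  have bound: "a + e * b < e * m" if "a < e" "b < m" for a b
  proof -
    have "a + e * b < e * (b + 1)" using that by simp
    also have "\<dots> \<le> e * m" using that by (intro mult_le_mono2) simp
    finally show ?thesis .
  qed
  have "i + e * k = j + e * l"
    by (rule inj_onD[OF inj_on_g_power eq]) (simp_all add: bound assms(1-4))
  then have "(i + e * k) mod e = (j + e * l) mod e" "(i + e * k) div e = (j + e * l) div e"
    by simp_all
  then show ?thesis using assms(1-4) e_pos by simp
qed

lemma card_cyc_class: "i < e \<Longrightarrow> card (cyc_class g e i) = m"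
  unfolding cyc_class_eq_image
  by (subst card_image) (auto simp: inj_on_def dest: g_power_eqD)

lemma cyc_class_disjoint:
  "i < e \<Longrightarrow> j < e \<Longrightarrow> i \<noteq> j \<Longrightarrow> cyc_class g e i \<inter> cyc_class g e j = {}"
  unfolding cyc_class_eq_image by (auto dest: g_power_eqD)

lemma Union_cyc_class: "(\<Union>i<e. cyc_class g e i) = UNIV - {0}"
proof
  show "(\<Union>i<e. cyc_class g e i) \<subseteq> UNIV - {0}"
    unfolding cyc_class_def using g_nonzero by auto
  show "UNIV - {0} \<subseteq> (\<Union>i<e. cyc_class g e i)"
  proof
    fix x :: 'a assume "x \<in> UNIV - {0}"
    then obtain t where t: "t < e * m" "x = g ^ t" using nonzero_eq_g_power by auto
    then have "t div e \<in> {..<m}" by (simp add: div_less_iff_less_mult mult.commute e_pos)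
    moreover have "x = g ^ (t mod e + e * (t div e))" using t by simp
    ultimately have "x \<in> cyc_class g e (t mod e)"
      unfolding cyc_class_eq_image by (rule rev_image_eqI)
    moreover have "t mod e \<in> {..<e}" using e_pos by simp
    ultimately show "x \<in> (\<Union>i<e. cyc_class g e i)" by blast
  qed
qed

lemma mult_cyc_class_zero:
  assumes "i < e" "\<sigma> \<in> cyc_class g e i"
  shows "(*) \<sigma> ` cyc_class g e 0 = cyc_class g e i"
proof (rule card_subset_eq)
  obtain k0 where k0: "\<sigma> = g ^ i * (g ^ e) ^ k0"
    using assms(2) unfolding cyc_class_def by auto
  show "(*) \<sigma> ` cyc_class g e 0 \<subseteq> cyc_class g e i"
  proof
    fix x assume "x \<in> (*) \<sigma> ` cyc_class g e 0"
    then obtain k where "x = g ^ i * (g ^ e) ^ (k0 + k)"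
      unfolding cyc_class_def k0 by (auto simp: power_add mult.assoc)
    then show "x \<in> cyc_class g e i" unfolding cyc_class_def by auto
  qed
  have "\<sigma> \<noteq> 0" using assms Union_cyc_class by blast
  then have "card ((*) \<sigma> ` cyc_class g e 0) = card (cyc_class g e 0)"
    by (intro card_image) (auto simp: inj_on_def)
  then show "card ((*) \<sigma> ` cyc_class g e 0) = card (cyc_class g e i)"
    using card_cyc_class assms(1) e_pos by simp
qed simp

lemma sum_card_cyc_class_differences:
  "(\<Sum>i<e. card {u \<in> cyc_class g e i. r - u \<in> D}) = card (D - {r})"
proof -
  have "(\<Sum>i<e. card {u \<in> cyc_class g e i. r - u \<in> D})
      = card (\<Union>i<e. {u \<in> cyc_class g e i. r - u \<in> D})"
    using cyc_class_disjoint by (intro card_UN_disjoint[symmetric]) auto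
  also have "(\<Union>i<e. {u \<in> cyc_class g e i. r - u \<in> D}) = {u. u \<noteq> 0 \<and> r - u \<in> D}"
    using Union_cyc_class by blast
  finally show ?thesis by (simp only: card_nonzero_differences)
qed

lemma row_zero_sum:
  fixes A B :: "nat \<Rightarrow> 'a \<Rightarrow> 'a \<Rightarrow> int" and C :: "'a \<Rightarrow> 'a \<Rightarrow> int"
  assumes A_row: "\<forall>i<e. \<forall>y. A i 0 y = (if y \<in> cyc_class g e 0 then 1 else 0)"
    and B_row: "\<forall>i<e. \<forall>y. B i 0 y = (if y \<in> cyc_class g e 0 then 1 else 0)"
    and B_circ: "\<forall>i<e. \<exists>\<sigma> \<in> cyc_class g e i. tau_circulant \<sigma> (B i)"
    and C_row: "\<forall>y. C 0 y = (if y \<in> cyc_class g e 0 then 1 else 0)"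
  shows "(\<Sum>i<e. mat_mult (A i) (B i) 0 r) + C 0 r = int m"
proof -
  let ?D = "cyc_class g e 0"
  have entry: "mat_mult (A i) (B i) 0 r = int (card {u \<in> cyc_class g e i. r - u \<in> ?D})"
    if "i < e" for i
  proof -
    obtain \<sigma> where \<sigma>: "\<sigma> \<in> cyc_class g e i" "tau_circulant \<sigma> (B i)"
      using B_circ \<open>i < e\<close> by blast
    have "\<sigma> \<noteq> 0" using \<sigma>(1) Union_cyc_class \<open>i < e\<close> by blast
    have "mat_mult (A i) (B i) 0 r = int (card {z \<in> ?D. r - \<sigma> * z \<in> ?D})"
      using A_row B_row \<open>i < e\<close> by (intro mat_mult_row_zero_indicator \<sigma>(2)) auto
    also have "\<dots> = int (card {u \<in> (*) \<sigma> ` ?D. r - u \<in> ?D})"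
      using card_scaled_differences[OF \<open>\<sigma> \<noteq> 0\<close>] by simp
    finally show ?thesis by (simp only: mult_cyc_class_zero[OF \<open>i < e\<close> \<sigma>(1)])
  qed
  have "(\<Sum>i<e. mat_mult (A i) (B i) 0 r) = int (card (?D - {r}))"
    by (simp add: entry sum_card_cyc_class_differences flip: of_nat_sum)
  moreover have "card ?D = m" using card_cyc_class e_pos by simp
  ultimately show ?thesis
    using C_row m_pos by (cases "r \<in> ?D") simp_all
qed

end

theorem mainTheorem7:
  fixes g :: "'a::{finite,field}" and e m :: nat and s :: 'a
    and A B :: "nat \<Rightarrow> 'a \<Rightarrow> 'a \<Rightarrow> int" and C :: "'a \<Rightarrow> 'a \<Rightarrow> int"
  assumes prim: "primitive_elem g"
    and qem: "CARD('a) - 1 = e * m" and epos: "0 < e" and mpos: "0 < m"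
    and A01: "\<forall>i<e. zero_one_mat (A i)" and B01: "\<forall>i<e. zero_one_mat (B i)"
    and Arow: "\<forall>i<e. \<forall>y. A i 0 y = (if y \<in> cyc_class g e 0 then 1 else 0)"
    and Brow: "\<forall>i<e. \<forall>y. B i 0 y = (if y \<in> cyc_class g e 0 then 1 else 0)"
    and ABcirc: "\<forall>i<e. tau_circulant s (mat_mult (A i) (B i))"
    and Bcirc: "\<forall>i<e. \<exists>si \<in> cyc_class g e i. tau_circulant si (B i)"
    and Ccirc: "tau_circulant s C"
    and Crow: "\<forall>y. C 0 y = (if y \<in> cyc_class g e 0 then 1 else 0)"
  shows "\<forall>x y. (\<Sum>i<e. mat_mult (A i) (B i) x y) + C x y = int m"
proof (intro allI)
  interpret cyclotomic_classes g e m using prim qem epos mpos by unfold_locales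
  fix x y
  have "(\<Sum>i<e. mat_mult (A i) (B i) x y) = (\<Sum>i<e. mat_mult (A i) (B i) 0 (y - s * x))"
    using ABcirc by (intro sum.cong refl tau_circulant_eq_row_zero) simp
  moreover have "C x y = C 0 (y - s * x)" using Ccirc tau_circulant_eq_row_zero by blast
  ultimately show "(\<Sum>i<e. mat_mult (A i) (B i) x y) + C x y = int m"
    using row_zero_sum[of A B C, OF Arow Brow Bcirc Crow] by simp
qed

end
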